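(* Let $\mathbf P=(P,\leq,{}',0,1)$ be an atomic pseudo-orthomodular poset of finite rank. Then its Dedekind-MacNeille completion $\mathrm{DM}(\mathbf P)$ is orthomodular.
   Context: For $M\subseteq P$, $U(M)$, $L(M)$ are the sets of upper and lower bounds; $U(a,b)=U(\{a,b\})$ etc. A poset with complementation is a bounded poset with antitone involution $'$ ($x\le y\Rightarrow y'\le x'$, $x''=x$) with $L(x,x')=\{0\}$, $U(x,x')=\{1\}$; it is pseudo-orthomodular if $L(U(L(x,y),y'),y)=L(x,y)$ for all $x,y$. A subset $S$ is orthogonal if $s\le t'$ for all distinct $s,t\in S$; $\mathbf P$ has finite rank if every orthogonal subset is finite. An atom is a minimal element of $P\setminus\{0\}$; $\mathbf P$ is atomic if every $b>0$ lies above some atom. The Dedekind-MacNeille completion $\mathrm{DM}(\mathbf P)$ is the complete lattice of subsets $B\subseteq P$ with $L(U(B))=B$ under inclusion, with antitone involution $X'=L(\{u'\mid u\in X\})$; a lattice with complementation is orthomodular if $x\vee y=((x\vee y)\wedge y')\vee y$ for all $x,y$. *)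

theory Defs
  imports Main
begin

text \<open>The poset P is the whole carrier type 'a with its order; zero, one and the
  complementation c are explicit parameters.\<close>

definition UB :: "'a::order set \<Rightarrow> 'a set" where
  "UB M = {u. \<forall>m\<in>M. m \<le> u}"

definition LB :: "'a::order set \<Rightarrow> 'a set" where
  "LB M = {l. \<forall>m\<in>M. l \<le> m}"

definition poset_with_complementation :: "'a::order \<Rightarrow> 'a \<Rightarrow> ('a \<Rightarrow> 'a) \<Rightarrow> bool" where
  "poset_with_complementation zero one c \<longleftrightarrow>
     (\<forall>x. zero \<le> x \<and> x \<le> one) \<and>
     (\<forall>x y. x \<le> y \<longrightarrow> c y \<le> c x) \<and>
     (\<forall>x. c (c x) = x) \<and>
     (\<forall>x. LB {x, c x} = {zero}) \<and>
     (\<forall>x. UB {x, c x} = {one})"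

definition pseudo_orthomodular :: "('a::order \<Rightarrow> 'a) \<Rightarrow> bool" where
  "pseudo_orthomodular c \<longleftrightarrow>
     (\<forall>x y. LB (UB (LB {x, y} \<union> {c y}) \<union> {y}) = LB {x, y})"

definition orthogonal :: "('a::order \<Rightarrow> 'a) \<Rightarrow> 'a set \<Rightarrow> bool" where
  "orthogonal c S \<longleftrightarrow> (\<forall>s\<in>S. \<forall>t\<in>S. s \<noteq> t \<longrightarrow> s \<le> c t)"

definition finite_rank :: "('a::order \<Rightarrow> 'a) \<Rightarrow> bool" where
  "finite_rank c \<longleftrightarrow> (\<forall>S. orthogonal c S \<longrightarrow> finite S)"

definition atom :: "'a::order \<Rightarrow> 'a \<Rightarrow> bool" where
  "atom zero a \<longleftrightarrow> a \<noteq> zero \<and> \<not> (\<exists>b. b \<noteq> zero \<and> b < a)"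

definition atomic :: "'a::order \<Rightarrow> bool" where
  "atomic zero \<longleftrightarrow> (\<forall>b. zero < b \<longrightarrow> (\<exists>a. atom zero a \<and> a \<le> b))"

definition DM :: "'a::order set set" where
  "DM = {B. LB (UB B) = B}"

definition dm_compl :: "('a::order \<Rightarrow> 'a) \<Rightarrow> 'a set \<Rightarrow> 'a set" where
  "dm_compl c X = LB (c ` X)"

definition dm_join :: "'a::order set \<Rightarrow> 'a set \<Rightarrow> 'a set" where
  "dm_join X Y = LB (UB (X \<union> Y))"

text \<open>In DM, meet is intersection, join is dm_join, bottom is LB (UB {}) and top is UNIV.\<close>

definition dm_lattice_with_complementation :: "('a::order \<Rightarrow> 'a) \<Rightarrow> bool" where
  "dm_lattice_with_complementation c \<longleftrightarrow>
     (\<forall>X\<in>DM. dm_compl c X \<in> DM) \<and>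
     (\<forall>X\<in>DM. \<forall>Y\<in>DM. X \<subseteq> Y \<longrightarrow> dm_compl c Y \<subseteq> dm_compl c X) \<and>
     (\<forall>X\<in>DM. dm_compl c (dm_compl c X) = X) \<and>
     (\<forall>X\<in>DM. X \<inter> dm_compl c X = LB (UB {})) \<and>
     (\<forall>X\<in>DM. dm_join X (dm_compl c X) = UNIV)"

definition dm_orthomodular :: "('a::order \<Rightarrow> 'a) \<Rightarrow> bool" where
  "dm_orthomodular c \<longleftrightarrow> dm_lattice_with_complementation c \<and>
     (\<forall>X\<in>DM. \<forall>Y\<in>DM. dm_join X Y = dm_join (dm_join X Y \<inter> dm_compl c Y) Y)"

end

theory Submission
  imports Defs
begin

text \<open>Call \<open>Y \<in> DM(P)\<close> orthomodular if every \<open>Z \<supseteq> Y\<close> in \<open>DM(P)\<close> satisfies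
  \<open>Z = Y \<squnion> (Z \<sqinter> Y')\<close>. Pseudo-orthomodularity of \<open>P\<close> lifts to the law
  \<open>(A \<squnion> y') \<sqinter> y = A\<close> in \<open>DM(P)\<close> for \<open>A \<le> y\<close> with \<open>y\<close> principal; dualising it by
  De Morgan shows that every principal ideal is orthomodular, and the property passes to joins
  of orthogonal elements. Given \<open>Y \<in> DM(P)\<close>, a maximal orthogonal set \<open>S\<close> of atoms in \<open>Y\<close>
  is finite by finite rank, so its join \<open>J\<close> is orthomodular and \<open>Y = J \<squnion> (Y \<sqinter> J')\<close>.
  By maximality and atomicity \<open>Y \<sqinter> J'\<close> contains no atom, hence is \<open>0\<close>, and \<open>Y = J\<close>.\<close>

lemma mem_UB_iff [simp]: "u \<in> UB M \<longleftrightarrow> (\<forall>m\<in>M. m \<le> u)"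
  by (simp add: UB_def)

lemma mem_LB_iff [simp]: "l \<in> LB M \<longleftrightarrow> (\<forall>m\<in>M. l \<le> m)"
  by (simp add: LB_def)

lemma UB_Un: "UB (A \<union> B) = UB A \<inter> UB B"
  by auto

lemma UB_antimono: "A \<subseteq> B \<Longrightarrow> UB B \<subseteq> UB A"
  unfolding UB_def by blast

lemma LB_antimono: "A \<subseteq> B \<Longrightarrow> LB B \<subseteq> LB A"
  unfolding LB_def by blast

lemma UB_LB_UB [simp]: "UB (LB (UB S)) = UB S"
  by auto

lemma LB_UB_LB [simp]: "LB (UB (LB S)) = LB S"
  by auto

lemma LB_UB_singleton [simp]: "LB (UB {a}) = LB {a}"
  by (auto intro: order_trans)

lemma UB_LB_singleton [simp]: "UB (LB {a}) = UB {a}"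
  by (metis LB_UB_singleton UB_LB_UB)

lemma LB_in_DM [simp]: "LB S \<in> DM"
  by (simp add: DM_def)

lemma DM_LB_UB: "X \<in> DM \<Longrightarrow> LB (UB X) = X"
  by (simp add: DM_def)

lemma DM_downward_closed:
  assumes "X \<in> DM" "x \<in> X" "y \<le> x"
  shows "y \<in> X"
proof -
  have "y \<in> LB (UB X)"
    using assms(2,3) by (auto intro: order_trans)
  with assms(1) show ?thesis
    by (simp add: DM_LB_UB)
qed

lemma LB_UB_least:
  assumes "Y \<in> DM" "X \<subseteq> Y"
  shows "LB (UB X) \<subseteq> Y"
proof -
  have "LB (UB X) \<subseteq> LB (UB Y)"
    using assms(2) by (intro LB_antimono UB_antimono)
  with assms(1) show ?thesis
    by (simp add: DM_LB_UB)
qed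

lemma DM_Int:
  assumes "X \<in> DM" "Y \<in> DM"
  shows "X \<inter> Y \<in> DM"
proof -
  have "LB (UB (X \<inter> Y)) \<subseteq> X \<inter> Y"
    using assms by (simp add: LB_UB_least)
  then show ?thesis
    by (auto simp: DM_def)
qed

lemma dm_join_in_DM [simp]: "dm_join X Y \<in> DM"
  by (simp add: dm_join_def)

lemma dm_join_upper: "X \<subseteq> dm_join X Y" "Y \<subseteq> dm_join X Y"
  by (auto simp: dm_join_def)

lemma dm_join_commute: "dm_join X Y = dm_join Y X"
  by (simp add: dm_join_def Un_commute)

lemma dm_join_closure_left [simp]: "dm_join (LB (UB X)) Y = dm_join X Y"
  by (simp add: dm_join_def UB_Un)

lemma dm_join_closure_right [simp]: "dm_join X (LB (UB Y)) = dm_join X Y"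
  by (simp add: dm_join_def UB_Un)

lemma dm_join_assoc: "dm_join (dm_join X Y) W = dm_join X (dm_join Y W)"
  unfolding dm_join_def[of X Y] dm_join_def[of Y W]
  by (simp only: dm_join_closure_left dm_join_closure_right) (simp add: dm_join_def sup_assoc)

lemma orthogonal_iff_pairwise: "orthogonal c S \<longleftrightarrow> pairwise (\<lambda>s t. s \<le> c t) S"
  by (simp add: orthogonal_def pairwise_def)

lemma ex_maximal_pairwise_subset:
  "\<exists>S\<subseteq>T. pairwise R S \<and> (\<forall>x\<in>T. pairwise R (insert x S) \<longrightarrow> x \<in> S)"
proof -
  let ?F = "{S. S \<subseteq> T \<and> pairwise R S}"
  have "\<Union>C \<in> ?F" if "C \<in> chains ?F" for C
    using that by (auto simp: chains_def intro: pairwise_chain_Union)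
  then obtain S where "S \<in> ?F" and "\<forall>S'\<in>?F. S \<subseteq> S' \<longrightarrow> S' = S"
    using Zorn_Lemma[of ?F] by blast
  then show ?thesis
    by blast
qed

definition dm_orthomodular_at :: "('a::order \<Rightarrow> 'a) \<Rightarrow> 'a set \<Rightarrow> bool" where
  "dm_orthomodular_at c Y \<longleftrightarrow> (\<forall>Z\<in>DM. Y \<subseteq> Z \<longrightarrow> Z = dm_join Y (Z \<inter> dm_compl c Y))"

locale complemented_poset =
  fixes zero one :: "'a::order" and c :: "'a \<Rightarrow> 'a"
  assumes poset_with_complementation: "poset_with_complementation zero one c"
begin

lemma zero_le: "zero \<le> x"
  using poset_with_complementation by (simp add: poset_with_complementation_def)

lemma le_one: "x \<le> one"
  using poset_with_complementation by (simp add: poset_with_complementation_def)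

lemma compl_antimono: "x \<le> y \<Longrightarrow> c y \<le> c x"
  using poset_with_complementation by (simp add: poset_with_complementation_def)

lemma compl_compl [simp]: "c (c x) = x"
  using poset_with_complementation by (simp add: poset_with_complementation_def)

lemma LB_compl_pair: "LB {x, c x} = {zero}"
  using poset_with_complementation by (simp add: poset_with_complementation_def)

lemma UB_compl_pair: "UB {x, c x} = {one}"
  using poset_with_complementation by (simp add: poset_with_complementation_def)

lemma le_compl_swap: "x \<le> c y \<longleftrightarrow> y \<le> c x"
  by (metis compl_antimono compl_compl)

lemma le_compl_self_imp_zero: "x \<le> c x \<Longrightarrow> x = zero"
  using LB_compl_pair[of x] by (auto simp: set_eq_iff)

lemma compl_le_self_imp_one: "c x \<le> x \<Longrightarrow> x = one"
  using UB_compl_pair[of x] by (auto simp: set_eq_iff)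

lemma LB_UB_empty: "LB (UB {}) = {zero}"
  using zero_le by (auto intro: order.antisym)

lemma zero_in_DM: "X \<in> DM \<Longrightarrow> zero \<in> X"
  using DM_LB_UB[of X] zero_le by auto

lemma mem_dm_compl_iff: "x \<in> dm_compl c X \<longleftrightarrow> c x \<in> UB X"
  by (auto simp: dm_compl_def le_compl_swap)

lemma dm_compl_in_DM [simp]: "dm_compl c X \<in> DM"
  by (simp add: dm_compl_def)

lemma dm_compl_antimono: "X \<subseteq> Y \<Longrightarrow> dm_compl c Y \<subseteq> dm_compl c X"
  unfolding dm_compl_def LB_def by blast

lemma dm_compl_LB_UB [simp]: "dm_compl c (LB (UB X)) = dm_compl c X"
  by (simp add: set_eq_iff mem_dm_compl_iff)

lemma dm_compl_LB_singleton [simp]: "dm_compl c (LB {p}) = LB {c p}"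
  using dm_compl_LB_UB[of "{p}"] by (simp add: dm_compl_def)

lemma dm_compl_dm_join: "dm_compl c (dm_join X Y) = dm_compl c X \<inter> dm_compl c Y"
  by (auto simp: dm_join_def mem_dm_compl_iff)

lemma dm_compl_eq_image_UB: "dm_compl c X = c ` UB X"
  unfolding set_eq_iff mem_dm_compl_iff by (metis compl_compl image_iff)

lemma dm_compl_dm_compl: "dm_compl c (dm_compl c X) = LB (UB X)"
  unfolding dm_compl_eq_image_UB[of X] by (simp add: dm_compl_def image_image)

lemma DM_dm_compl_dm_compl: "X \<in> DM \<Longrightarrow> dm_compl c (dm_compl c X) = X"
  by (simp add: dm_compl_dm_compl DM_LB_UB)

lemma dm_compl_Int:
  assumes "X \<in> DM" "Y \<in> DM"
  shows "dm_compl c (X \<inter> Y) = dm_join (dm_compl c X) (dm_compl c Y)"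
proof -
  have "X \<inter> Y = dm_compl c (dm_join (dm_compl c X) (dm_compl c Y))"
    using assms by (simp add: dm_compl_dm_join DM_dm_compl_dm_compl)
  then show ?thesis
    by (simp add: DM_dm_compl_dm_compl)
qed

lemma DM_Int_dm_compl: "X \<in> DM \<Longrightarrow> X \<inter> dm_compl c X = LB (UB {})"
  by (auto simp: LB_UB_empty mem_dm_compl_iff zero_in_DM zero_le le_compl_self_imp_zero
      dm_compl_def)

lemma dm_join_dm_compl: "dm_join X (dm_compl c X) = UNIV"
proof -
  have "UB (X \<union> dm_compl c X) \<subseteq> {one}"
  proof
    fix u
    assume u: "u \<in> UB (X \<union> dm_compl c X)"
    then have "c u \<in> dm_compl c X"
      by (simp add: mem_dm_compl_iff)
    with u show "u \<in> {one}"
      by (simp add: compl_le_self_imp_one)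
  qed
  then have "LB {one} \<subseteq> dm_join X (dm_compl c X)"
    unfolding dm_join_def by (rule LB_antimono)
  then show ?thesis
    by (auto simp: le_one)
qed

theorem dm_lattice_with_complementation: "dm_lattice_with_complementation c"
  by (simp add: dm_lattice_with_complementation_def dm_compl_antimono DM_dm_compl_dm_compl
      DM_Int_dm_compl dm_join_dm_compl)

lemma DM_ex_atom:
  assumes "atomic zero" "X \<in> DM" "b \<in> X" "b \<noteq> zero"
  shows "\<exists>a\<in>X. atom zero a"
proof -
  have "zero < b"
    using assms(4) zero_le[of b] by simp
  then obtain a where "atom zero a" "a \<le> b"
    using assms(1) by (auto simp: atomic_def)
  then show ?thesis
    using assms(2,3) DM_downward_closed by blast
qed

lemma orthogonal_insert:
  "orthogonal c (insert a S) \<longleftrightarrow> orthogonal c S \<and> (\<forall>s\<in>S. s \<noteq> a \<longrightarrow> s \<le> c a)"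
  by (auto simp: orthogonal_iff_pairwise pairwise_insert le_compl_swap)

lemma dm_orthomodularI:
  assumes "\<And>Y. Y \<in> DM \<Longrightarrow> dm_orthomodular_at c Y"
  shows "dm_orthomodular c"
proof -
  have "dm_join X Y = dm_join (dm_join X Y \<inter> dm_compl c Y) Y" if "Y \<in> DM" for X Y
    using assms[OF that] dm_join_upper(2)[of Y X]
    by (simp add: dm_orthomodular_at_def dm_join_commute)
  then show ?thesis
    by (simp add: dm_orthomodular_def dm_lattice_with_complementation)
qed

lemma dm_orthomodular_at_LB_UB_empty: "dm_orthomodular_at c (LB (UB {}))"
proof -
  have "dm_compl c {} = UNIV"
    by (simp add: dm_compl_def LB_def)
  then show ?thesis
    by (simp add: dm_orthomodular_at_def) (auto simp: dm_join_def DM_LB_UB)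
qed

lemma dm_orthomodular_at_dm_join:
  assumes X: "dm_orthomodular_at c X" and Y: "dm_orthomodular_at c Y"
    and orth: "X \<subseteq> dm_compl c Y"
  shows "dm_orthomodular_at c (dm_join X Y)"
  unfolding dm_orthomodular_at_def
proof (intro ballI impI)
  fix Z
  assume "Z \<in> DM" and XY_Z: "dm_join X Y \<subseteq> Z"
  define W where "W = Z \<inter> dm_compl c Y"
  have "W \<in> DM"
    using \<open>Z \<in> DM\<close> by (simp add: W_def DM_Int)
  have "X \<subseteq> W"
    using XY_Z dm_join_upper(1)[of X Y] orth by (auto simp: W_def)
  have "Z = dm_join Y W"
    using Y \<open>Z \<in> DM\<close> XY_Z dm_join_upper(2)[of Y X] by (auto simp: dm_orthomodular_at_def W_def)
  also have "W = dm_join X (W \<inter> dm_compl c X)"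
    using X \<open>W \<in> DM\<close> \<open>X \<subseteq> W\<close> by (simp add: dm_orthomodular_at_def)
  also have "W \<inter> dm_compl c X = Z \<inter> dm_compl c (dm_join X Y)"
    by (auto simp: W_def dm_compl_dm_join)
  finally show "Z = dm_join (dm_join X Y) (Z \<inter> dm_compl c (dm_join X Y))"
    by (simp add: dm_join_assoc[symmetric] dm_join_commute[of Y X])
qed

lemma dm_orthomodular_at_orthogonal:
  assumes "finite S" "orthogonal c S" "\<And>a. a \<in> S \<Longrightarrow> dm_orthomodular_at c (LB {a})"
  shows "dm_orthomodular_at c (LB (UB S))"
  using assms
proof (induction S rule: finite_induct)
  case empty
  show ?case
    by (rule dm_orthomodular_at_LB_UB_empty)
next
  case (insert a S)
  have "orthogonal c S" and "c a \<in> UB S"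
    using insert.hyps(2) insert.prems(1) by (auto simp: orthogonal_insert)
  then have "LB (UB S) \<subseteq> dm_compl c (LB {a})"
    by auto
  moreover have "dm_orthomodular_at c (LB (UB S))"
    using insert.IH insert.prems(2) \<open>orthogonal c S\<close> by blast
  ultimately have "dm_orthomodular_at c (dm_join (LB (UB S)) (LB {a}))"
    using insert.prems(2) by (intro dm_orthomodular_at_dm_join) auto
  moreover have "dm_join (LB (UB S)) (LB {a}) = LB (UB (insert a S))"
    using dm_join_closure_left[of S "LB (UB {a})"] dm_join_closure_right[of S "{a}"]
    by (simp add: dm_join_def[of S "{a}"] Un_commute)
  ultimately show ?case
    by simp
qed

lemma DM_eq_LB_UB_maximal_orthogonal_atoms:
  assumes "atomic zero" "Y \<in> DM" "S \<subseteq> Y" "orthogonal c S"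
    and maximal: "\<And>a. a \<in> Y \<Longrightarrow> atom zero a \<Longrightarrow> orthogonal c (insert a S) \<Longrightarrow> a \<in> S"
    and orthomodular: "dm_orthomodular_at c (LB (UB S))"
  shows "Y = LB (UB S)"
proof -
  define J where "J = LB (UB S)"
  have "J \<in> DM"
    by (simp add: J_def)
  have "J \<subseteq> Y"
    unfolding J_def using assms(2,3) by (rule LB_UB_least)
  have "Y \<inter> dm_compl c J \<subseteq> {zero}"
  proof (rule ccontr)
    assume "\<not> Y \<inter> dm_compl c J \<subseteq> {zero}"
    then obtain a where a: "a \<in> Y \<inter> dm_compl c J" "atom zero a"
      using DM_ex_atom[OF assms(1) DM_Int[OF assms(2) dm_compl_in_DM]] by blast
    then have "c a \<in> UB S"
      by (simp add: J_def mem_dm_compl_iff)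
    then have "orthogonal c (insert a S)"
      using assms(4) by (simp add: orthogonal_insert)
    then have "a \<in> J"
      using maximal a by (auto simp: J_def)
    with \<open>c a \<in> UB S\<close> have "a = zero"
      by (simp add: J_def le_compl_self_imp_zero)
    with a show False
      by (simp add: atom_def)
  qed
  then have "J \<union> (Y \<inter> dm_compl c J) \<subseteq> J"
    using zero_in_DM[OF \<open>J \<in> DM\<close>] by blast
  then have "dm_join J (Y \<inter> dm_compl c J) \<subseteq> J"
    unfolding dm_join_def using \<open>J \<in> DM\<close> by (rule LB_UB_least[rotated])
  moreover have "Y = dm_join J (Y \<inter> dm_compl c J)"
    using orthomodular \<open>J \<subseteq> Y\<close> assms(2) by (simp add: J_def dm_orthomodular_at_def)
  ultimately show ?thesis
    using \<open>J \<subseteq> Y\<close> by (simp add: J_def)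
qed

end

locale pseudo_orthomodular_poset = complemented_poset +
  assumes pseudo_orthomodular: "pseudo_orthomodular c"
begin

lemma orthomodular_law_below_principal:
  assumes "A \<in> DM" "A \<subseteq> LB {y}"
  shows "dm_join A (LB {c y}) \<inter> LB {y} = A"
proof
  show "dm_join A (LB {c y}) \<inter> LB {y} \<subseteq> A"
  proof
    fix z
    assume z: "z \<in> dm_join A (LB {c y}) \<inter> LB {y}"
    have "z \<le> u" if "u \<in> UB A" for u
    proof -
      have "A \<subseteq> LB {u, y}"
        using that assms(2) by auto
      then have "UB (LB {u, y} \<union> {c y}) \<subseteq> UB (A \<union> {c y})"
        by (intro UB_antimono) auto
      then have "z \<in> LB (UB (LB {u, y} \<union> {c y}) \<union> {y})"
        using z by (auto simp: dm_join_def UB_Un)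
      also have "\<dots> = LB {u, y}"
        using pseudo_orthomodular by (simp add: pseudo_orthomodular_def)
      finally show "z \<le> u"
        by simp
    qed
    then have "z \<in> LB (UB A)"
      by simp
    with assms(1) show "z \<in> A"
      by (simp add: DM_LB_UB)
  qed
  show "A \<subseteq> dm_join A (LB {c y}) \<inter> LB {y}"
    using assms(2) dm_join_upper(1) by blast
qed

lemma dm_orthomodular_at_LB_singleton: "dm_orthomodular_at c (LB {p})"
  unfolding dm_orthomodular_at_def
proof (intro ballI impI)
  fix Z
  assume "Z \<in> DM" "LB {p} \<subseteq> Z"
  let ?A = "dm_compl c Z"
  have "?A \<subseteq> LB {c p}"
    using dm_compl_antimono[OF \<open>LB {p} \<subseteq> Z\<close>] by simp
  then have "dm_join ?A (LB {p}) \<inter> LB {c p} = ?A"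
    using orthomodular_law_below_principal[of ?A "c p"] by simp
  then have "dm_compl c (dm_join ?A (LB {p}) \<inter> LB {c p}) = Z"
    using \<open>Z \<in> DM\<close> by (simp add: DM_dm_compl_dm_compl)
  moreover have "dm_compl c (dm_join ?A (LB {p}) \<inter> LB {c p}) = dm_join (Z \<inter> LB {c p}) (LB {p})"
    using \<open>Z \<in> DM\<close> by (simp add: dm_compl_Int dm_compl_dm_join DM_dm_compl_dm_compl)
  ultimately show "Z = dm_join (LB {p}) (Z \<inter> dm_compl c (LB {p}))"
    by (simp add: dm_join_commute)
qed

lemma dm_orthomodular_at_DM:
  assumes "atomic zero" "finite_rank c" "Y \<in> DM"
  shows "dm_orthomodular_at c Y"
proof -
  obtain S where "S \<subseteq> {a \<in> Y. atom zero a}" and "orthogonal c S"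
    and "\<And>a. a \<in> Y \<Longrightarrow> atom zero a \<Longrightarrow> orthogonal c (insert a S) \<Longrightarrow> a \<in> S"
    using ex_maximal_pairwise_subset[of "{a \<in> Y. atom zero a}" "\<lambda>s t. s \<le> c t"]
    by (auto simp: orthogonal_iff_pairwise)
  moreover have "finite S"
    using assms(2) \<open>orthogonal c S\<close> by (simp add: finite_rank_def)
  then have "dm_orthomodular_at c (LB (UB S))"
    using \<open>orthogonal c S\<close>
    by (intro dm_orthomodular_at_orthogonal) (simp_all add: dm_orthomodular_at_LB_singleton)
  ultimately show ?thesis
    using DM_eq_LB_UB_maximal_orthogonal_atoms[OF assms(1,3)] by auto
qed

end

theorem theorem7:
  fixes zero one :: "'a::order" and c :: "'a \<Rightarrow> 'a"
  assumes "poset_with_complementation zero one c"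
    and "pseudo_orthomodular c"
    and "atomic zero"
    and "finite_rank c"
  shows "dm_orthomodular c"
proof -
  interpret pseudo_orthomodular_poset zero one c
    using assms(1,2) by unfold_locales
  show ?thesis
    using dm_orthomodular_at_DM[OF assms(3,4)] by (rule dm_orthomodularI)
qed

end
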